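(* Let $K$ be the field of fractions of a complete discrete valuation ring $\mathcal{O}$. In the coefficient-choosing game of degree $d = 4$ over $K$, if Nora makes the last move then Nora has a winning strategy.
   Context: The coefficient-choosing game of degree $d$ over $K$: Nora and Wanda alternately choose coefficients of $f(x) = a_d x^d + \cdots + a_0$; on each move the current player picks a not-yet-chosen coefficient and assigns it a value in $K$, subject to $a_d \neq 0$, $a_0 \neq 0$. After all $d+1$ coefficients are chosen, Wanda wins if $f$ has a root in $K$, and Nora wins otherwise. *)

theory Defs
  imports "HOL-Computational_Algebra.Polynomial"
begin

text \<open>A normalized discrete valuation on a field K, given on nonzero elements
  (v 0 = +infinity is implicit: all conditions are only imposed on nonzero elements).
  The valuation ring O = {x. x = 0 or v x \<ge> 0} is then a DVR with fraction field K.\<close>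
definition discrete_valuation :: "('a::field \<Rightarrow> int) \<Rightarrow> bool" where
  "discrete_valuation v \<longleftrightarrow>
     (\<forall>x y. x \<noteq> 0 \<longrightarrow> y \<noteq> 0 \<longrightarrow> v (x * y) = v x + v y) \<and>
     (\<forall>x y. x \<noteq> 0 \<longrightarrow> y \<noteq> 0 \<longrightarrow> x + y \<noteq> 0 \<longrightarrow> v (x + y) \<ge> min (v x) (v y)) \<and>
     (\<forall>n::int. \<exists>x. x \<noteq> 0 \<and> v x = n)"

definition v_close :: "('a::field \<Rightarrow> int) \<Rightarrow> int \<Rightarrow> 'a \<Rightarrow> 'a \<Rightarrow> bool" where
  "v_close v N x y \<longleftrightarrow> x = y \<or> v (x - y) \<ge> N"

definition v_complete :: "('a::field \<Rightarrow> int) \<Rightarrow> bool" where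
  "v_complete v \<longleftrightarrow>
     (\<forall>s :: nat \<Rightarrow> 'a.
        (\<forall>N. \<exists>M. \<forall>m n. M \<le> m \<longrightarrow> M \<le> n \<longrightarrow> v_close v N (s m) (s n)) \<longrightarrow>
        (\<exists>L. \<forall>N. \<exists>M. \<forall>n. M \<le> n \<longrightarrow> v_close v N (s n) L))"

text \<open>Coefficient-choosing game of degree d. A state assigns to some of the indices
  0..d a chosen coefficient (None = not yet chosen).\<close>
definition legal_move :: "nat \<Rightarrow> (nat \<Rightarrow> 'a::field option) \<Rightarrow> nat \<Rightarrow> 'a \<Rightarrow> bool" where
  "legal_move d s i c \<longleftrightarrow> i \<le> d \<and> s i = None \<and> ((i = d \<or> i = 0) \<longrightarrow> c \<noteq> 0)"

definition final_poly :: "nat \<Rightarrow> (nat \<Rightarrow> 'a::field option) \<Rightarrow> 'a poly" where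
  "final_poly d s = (\<Sum>i\<le>d. monom (the (s i)) i)"

fun nora_wins :: "nat \<Rightarrow> nat \<Rightarrow> bool \<Rightarrow> (nat \<Rightarrow> 'a::field option) \<Rightarrow> bool" where
  "nora_wins d 0 t s = (\<not> (\<exists>x. poly (final_poly d s) x = 0))"
| "nora_wins d (Suc k) t s =
     (if t then (\<exists>i c. legal_move d s i c \<and> nora_wins d k False (s(i := Some c)))
      else (\<forall>i c. legal_move d s i c \<longrightarrow> nora_wins d k True (s(i := Some c))))"

definition nora_has_winning_strategy :: "'a::field itself \<Rightarrow> nat \<Rightarrow> bool \<Rightarrow> bool" where
  "nora_has_winning_strategy _ d nora_first =
     nora_wins d (Suc d) nora_first (\<lambda>_. None :: 'a option)"

text \<open>There are d+1 moves, alternating; Nora makes the last move iff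
  (Nora moves first iff d+1 is odd).\<close>
definition nora_makes_last_move :: "nat \<Rightarrow> bool \<Rightarrow> bool" where
  "nora_makes_last_move d nora_first \<longleftrightarrow> (nora_first \<longleftrightarrow> odd (Suc d))"

end

theory Submission
  imports Defs
begin

text \<open>Nora opens with \<open>a\<^sub>1 = 0\<close> and answers Wanda's move with \<open>a\<^sub>3 = 0\<close>, or with
  \<open>a\<^sub>2 = 0\<close> if Wanda took \<open>a\<^sub>3\<close>. Whatever Wanda does next, Nora's last move completes one of
  three root-free patterns. If the open coefficient is \<open>a\<^sub>0\<close> or \<open>a\<^sub>4\<close>, she gives it a valuation so
  small, and off by one modulo 4 from the valuation of the opposite end coefficient, that the Newton
  polygon is a single segment of non-integral slope; then for every \<open>x\<close> one of the two end terms
  strictly dominates. If the open coefficient is \<open>a\<^sub>2\<close> in \<open>a\<^sub>0 + a\<^sub>2 x\<^sup>2 + a\<^sub>4 x\<^sup>4\<close>, she takes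
  \<open>a\<^sub>2 = 0\<close> when \<open>v a\<^sub>0 - v a\<^sub>4\<close> is odd and \<open>v a\<^sub>2 = min (v a\<^sub>0) (v a\<^sub>4) - 1\<close> otherwise, and again
  one term strictly dominates for every \<open>x\<close>. A sum with a strictly dominant term is nonzero by
  the ultrametric inequality.\<close>

lemma discrete_valuation_mult:
  "discrete_valuation v \<Longrightarrow> x \<noteq> 0 \<Longrightarrow> y \<noteq> 0 \<Longrightarrow> v (x * y) = v x + v y"
  unfolding discrete_valuation_def by blast

lemma discrete_valuation_add:
  "discrete_valuation v \<Longrightarrow> x \<noteq> 0 \<Longrightarrow> y \<noteq> 0 \<Longrightarrow> x + y \<noteq> 0 \<Longrightarrow>
    min (v x) (v y) \<le> v (x + y)"
  unfolding discrete_valuation_def by blast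

lemma discrete_valuation_surj:
  "discrete_valuation v \<Longrightarrow> \<exists>x. x \<noteq> 0 \<and> v x = n"
  unfolding discrete_valuation_def by blast

lemma discrete_valuation_one: "discrete_valuation v \<Longrightarrow> v 1 = 0"
  using discrete_valuation_mult[of v 1 1] by simp

lemma discrete_valuation_minus:
  assumes "discrete_valuation v" "x \<noteq> 0"
  shows "v (- x) = v x"
proof -
  have "v (-1) + v (-1) = v 1"
    using discrete_valuation_mult[OF assms(1), of "-1" "-1"] by simp
  then have "v (-1) = 0"
    using discrete_valuation_one[OF assms(1)] by simp
  then show ?thesis
    using discrete_valuation_mult[OF assms(1), of "-1" x] assms(2) by simp
qed

lemma discrete_valuation_monomial:
  assumes "discrete_valuation v" "a \<noteq> 0" "x \<noteq> 0"
  shows "v (a * x ^ n) = v a + int n * v x"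
proof -
  have "v (x ^ n) = int n * v x"
    by (induction n)
      (simp_all add: assms discrete_valuation_one discrete_valuation_mult algebra_simps)
  then show ?thesis
    using assms by (simp add: discrete_valuation_mult)
qed

lemma discrete_valuation_sum_greater:
  assumes "discrete_valuation v" "finite I" "\<forall>i\<in>I. f i \<noteq> 0 \<longrightarrow> w < v (f i)" "sum f I \<noteq> 0"
  shows "w < v (sum f I)"
  using assms(2-4)
proof (induction I rule: finite_induct)
  case empty
  then show ?case by simp
next
  case (insert i I)
  then have sum_insert: "sum f (insert i I) = f i + sum f I"
    by simp
  show ?case
  proof (cases "f i = 0 \<or> sum f I = 0")
    case True
    then show ?thesis
      using insert by auto
  next
    case False
    then have "min (v (f i)) (v (sum f I)) \<le> v (sum f (insert i I))"
      using discrete_valuation_add[OF assms(1)] insert.prems(2) sum_insert by metis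
    then show ?thesis
      using insert False by fastforce
  qed
qed

lemma discrete_valuation_sum_dominant_ne_zero:
  assumes dv: "discrete_valuation v" and "finite I" "j \<in> I" "f j \<noteq> 0"
    and dominant: "\<forall>i\<in>I - {j}. f i \<noteq> 0 \<longrightarrow> v (f j) < v (f i)"
  shows "sum f I \<noteq> 0"
proof
  assume "sum f I = 0"
  then have "sum f (I - {j}) = - f j"
    using assms(2,3) by (simp add: sum.remove eq_neg_iff_add_eq_0 add.commute)
  moreover have "v (f j) < v (sum f (I - {j}))" if "sum f (I - {j}) \<noteq> 0"
    using discrete_valuation_sum_greater[OF dv _ dominant that] assms(2) by simp
  ultimately show False
    using discrete_valuation_minus[OF dv \<open>f j \<noteq> 0\<close>] \<open>f j \<noteq> 0\<close> by simp
qed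

lemma poly_ne_zero_if_dominant_term:
  assumes dv: "discrete_valuation v" and "x \<noteq> 0" "coeff p j \<noteq> 0"
    and dominant: "\<forall>i. i \<noteq> j \<longrightarrow> coeff p i \<noteq> 0 \<longrightarrow>
                     v (coeff p j) + int j * v x < v (coeff p i) + int i * v x"
  shows "poly p x \<noteq> 0"
proof -
  have "(\<Sum>i\<le>degree p. coeff p i * x ^ i) \<noteq> 0"
  proof (rule discrete_valuation_sum_dominant_ne_zero[OF dv])
    show "j \<in> {..degree p}"
      using le_degree[OF assms(3)] by simp
    show "\<forall>i\<in>{..degree p} - {j}. coeff p i * x ^ i \<noteq> 0 \<longrightarrow>
        v (coeff p j * x ^ j) < v (coeff p i * x ^ i)"
      using dominant assms(2,3) by (simp add: discrete_valuation_monomial[OF dv])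
  qed (use assms(2,3) in auto)
  then show ?thesis
    by (simp add: poly_altdef)
qed

text \<open>The last hypothesis says that every point \<open>(i, v a\<^sub>i)\<close> lies strictly above the segment
  joining \<open>(0, v a\<^sub>0)\<close> and \<open>(d, v a\<^sub>d)\<close>; non-divisibility rules out the one valuation of \<open>x\<close>
  at which the two end terms could cancel.\<close>

lemma poly_ne_zero_if_newton_segment:
  fixes v :: "'a::field \<Rightarrow> int" and p :: "'a poly"
  assumes dv: "discrete_valuation v" and "coeff p 0 \<noteq> 0"
    and not_dvd: "\<not> int (degree p) dvd v (coeff p 0) - v (lead_coeff p)"
    and above: "\<forall>i. 0 < i \<longrightarrow> i < degree p \<longrightarrow> coeff p i \<noteq> 0 \<longrightarrow>
      int (degree p - i) * v (coeff p 0) + int i * v (lead_coeff p) < int (degree p) * v (coeff p i)"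
  shows "poly p x \<noteq> 0"
proof (cases "x = 0")
  case True
  then show ?thesis
    using \<open>coeff p 0 \<noteq> 0\<close> by (simp add: poly_0_coeff_0)
next
  case x: False
  define d where "d = degree p"
  define a b s where "a = v (coeff p 0)" and "b = v (lead_coeff p)" and "s = v x"
  have "lead_coeff p \<noteq> 0"
    using \<open>coeff p 0 \<noteq> 0\<close> by auto
  have middle: "int (d - i) * a + int i * b < int d * v (coeff p i)"
    if "0 < i" "i < d" "coeff p i \<noteq> 0" for i
    using above that unfolding a_def b_def d_def by blast
  have "a \<noteq> b + int d * s"
    using not_dvd unfolding a_def b_def d_def by (metis add_diff_cancel_left' dvd_triv_left)
  then consider "a < b + int d * s" | "b + int d * s < a"
    by linarith
  then show ?thesis
  proof cases
    case 1
    have "a < v (coeff p i) + int i * s" if "i \<noteq> 0" "coeff p i \<noteq> 0" for i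
    proof (cases "i = d")
      case True
      then show ?thesis
        using 1 unfolding b_def d_def by simp
    next
      case False
      then have "i < d"
        using le_degree[OF that(2)] unfolding d_def by simp
      have "int i * a < int i * (b + int d * s)"
        using 1 that(1) by simp
      then have "int d * a < int d * (v (coeff p i) + int i * s)"
        using middle[OF _ \<open>i < d\<close> that(2)] that(1) \<open>i < d\<close>
        by (simp add: algebra_simps)
      then show ?thesis
        by (simp add: mult_less_cancel_left)
    qed
    then show ?thesis
      using poly_ne_zero_if_dominant_term[OF dv x \<open>coeff p 0 \<noteq> 0\<close>]
      unfolding a_def s_def by simp
  next
    case 2
    have "b + int d * s < v (coeff p i) + int i * s" if "i \<noteq> d" "coeff p i \<noteq> 0" for i
    proof (cases "i = 0")
      case True
      then show ?thesis
        using 2 unfolding a_def by simp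
    next
      case False
      then have "i < d"
        using le_degree[OF that(2)] that(1) unfolding d_def by simp
      have "int (d - i) * (b + int d * s) < int (d - i) * a"
        using 2 \<open>i < d\<close> by simp
      then have "int d * (b + int d * s) < int d * (v (coeff p i) + int i * s)"
        using middle[OF _ \<open>i < d\<close> that(2)] False \<open>i < d\<close>
        by (simp add: algebra_simps)
      then show ?thesis
        by (simp add: mult_less_cancel_left)
    qed
    then show ?thesis
      using poly_ne_zero_if_dominant_term[OF dv x \<open>lead_coeff p \<noteq> 0\<close>]
      unfolding b_def d_def s_def by simp
  qed
qed

lemma exists_uniform_lower_bound:
  fixes f :: "nat \<Rightarrow> int"
  shows "\<exists>K \<ge> 0. \<forall>i<n. w - K < f i"
proof (intro exI conjI allI impI)
  let ?K = "1 + (\<Sum>j<n. \<bar>f j - w\<bar>)"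
  show "0 \<le> ?K"
    by (simp add: sum_nonneg)
  fix i
  assume "i < n"
  then have "\<bar>f i - w\<bar> \<le> (\<Sum>j<n. \<bar>f j - w\<bar>)"
    by (intro member_le_sum) auto
  then show "w - ?K < f i"
    by linarith
qed

lemma exists_constant_coeff_without_root:
  fixes v :: "'a::field \<Rightarrow> int" and p :: "'a poly"
  assumes dv: "discrete_valuation v" and "coeff p 0 = 0" "2 \<le> degree p"
  shows "\<exists>c. c \<noteq> 0 \<and> (\<forall>x. poly (p + [:c:]) x \<noteq> 0)"
proof -
  define d where "d = degree p"
  define b where "b = v (lead_coeff p)"
  obtain K where "K \<ge> 0" and K: "\<And>i. i < d \<Longrightarrow> b - K < v (coeff p i)"
    using exists_uniform_lower_bound[of d b "\<lambda>i. v (coeff p i)"] by blast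
  obtain c where c: "c \<noteq> 0" "v c = b - 1 - int d * K"
    using discrete_valuation_surj[OF dv] by blast
  define q where "q = p + [:c:]"
  have q: "degree q = d" "coeff q 0 = c" "lead_coeff q = lead_coeff p"
    "\<And>i. 0 < i \<Longrightarrow> coeff q i = coeff p i"
    using assms(2,3) unfolding q_def d_def
    by (auto simp: degree_add_eq_left coeff_pCons split: nat.split)
  have "poly q x \<noteq> 0" for x
  proof (rule poly_ne_zero_if_newton_segment[OF dv])
    show "coeff q 0 \<noteq> 0"
      using c q by simp
    have "\<not> int d dvd 1 + int d * K"
      using assms(3) by (simp add: d_def dvd_add_left_iff)
    moreover have "v (coeff q 0) - v (lead_coeff q) = - (1 + int d * K)"
      using c q unfolding b_def by simp
    ultimately show "\<not> int (degree q) dvd v (coeff q 0) - v (lead_coeff q)"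
      using q(1) by (metis dvd_minus_iff)
    show "\<forall>i. 0 < i \<longrightarrow> i < degree q \<longrightarrow> coeff q i \<noteq> 0 \<longrightarrow>
      int (degree q - i) * v (coeff q 0) + int i * v (lead_coeff q) < int (degree q) * v (coeff q i)"
    proof (intro allI impI)
      fix i
      assume i: "0 < i" "i < degree q"
      have "1 + int d * K \<le> int (d - i) * (1 + int d * K)"
        using mult_right_mono[of 1 "int (d - i)" "1 + int d * K"] i q \<open>K \<ge> 0\<close> by simp
      moreover have "int d * b - int d * K < int d * v (coeff p i)"
        using mult_strict_left_mono[OF K[of i], of "int d"] i q by (simp add: right_diff_distrib)
      moreover have "int (d - i) * (b - 1 - int d * K) + int i * b =
          int d * b - int (d - i) * (1 + int d * K)"
        using i q by (simp add: algebra_simps)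
      ultimately show "int (degree q - i) * v (coeff q 0) + int i * v (lead_coeff q) <
          int (degree q) * v (coeff q i)"
        using i q c unfolding b_def by simp
    qed
  qed
  then show ?thesis
    using c unfolding q_def by blast
qed

lemma exists_leading_coeff_without_root:
  fixes v :: "'a::field \<Rightarrow> int" and p :: "'a poly"
  assumes dv: "discrete_valuation v" and "coeff p 0 \<noteq> 0" "degree p < d" "2 \<le> d"
  shows "\<exists>c. c \<noteq> 0 \<and> (\<forall>x. poly (p + monom c d) x \<noteq> 0)"
proof -
  define a where "a = v (coeff p 0)"
  obtain K where "K \<ge> 0" and K: "\<And>i. i < d \<Longrightarrow> a - K < v (coeff p i)"
    using exists_uniform_lower_bound[of d a "\<lambda>i. v (coeff p i)"] by blast
  obtain c where c: "c \<noteq> 0" "v c = a - 1 - int d * K"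
    using discrete_valuation_surj[OF dv] by blast
  define q where "q = p + monom c d"
  have q: "degree q = d" "lead_coeff q = c" "\<And>i. i < d \<Longrightarrow> coeff q i = coeff p i"
    using assms(3) c(1) unfolding q_def
    by (auto simp: degree_add_eq_right degree_monom_eq coeff_monom coeff_eq_0)
  have "poly q x \<noteq> 0" for x
  proof (rule poly_ne_zero_if_newton_segment[OF dv])
    show "coeff q 0 \<noteq> 0"
      using assms(2,4) q by simp
    have "\<not> int d dvd 1 + int d * K"
      using assms(4) by (simp add: dvd_add_left_iff)
    moreover have "v (coeff q 0) - v (lead_coeff q) = 1 + int d * K"
      using c q assms(4) unfolding a_def by simp
    ultimately show "\<not> int (degree q) dvd v (coeff q 0) - v (lead_coeff q)"
      using q(1) by metis
    show "\<forall>i. 0 < i \<longrightarrow> i < degree q \<longrightarrow> coeff q i \<noteq> 0 \<longrightarrow>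
      int (degree q - i) * v (coeff q 0) + int i * v (lead_coeff q) < int (degree q) * v (coeff q i)"
    proof (intro allI impI)
      fix i
      assume i: "0 < i" "i < degree q"
      have "1 + int d * K \<le> int i * (1 + int d * K)"
        using mult_right_mono[of 1 "int i" "1 + int d * K"] i \<open>K \<ge> 0\<close> by simp
      moreover have "int d * a - int d * K < int d * v (coeff p i)"
        using mult_strict_left_mono[OF K[of i], of "int d"] i q by (simp add: right_diff_distrib)
      moreover have "int (d - i) * a + int i * (a - 1 - int d * K) =
          int d * a - int i * (1 + int d * K)"
        using i q by (simp add: algebra_simps)
      ultimately show "int (degree q - i) * v (coeff q 0) + int i * v (lead_coeff q) <
          int (degree q) * v (coeff q i)"
        using i q c assms(4) unfolding a_def by simp
    qed
  qed
  then show ?thesis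
    using c unfolding q_def by blast
qed

lemma exists_middle_coeff_without_root:
  fixes v :: "'a::field \<Rightarrow> int" and a b :: 'a
  assumes dv: "discrete_valuation v" and "a \<noteq> 0" "b \<noteq> 0"
  shows "\<exists>c. \<forall>x. poly [:a, 0, c, 0, b:] x \<noteq> 0"
proof (cases "even (v a - v b)")
  case False
  then have "\<not> int 4 dvd v a - v b"
    by (metis dvd_trans even_numeral of_nat_numeral)
  then have "poly [:a, 0, 0, 0, b:] x \<noteq> 0" for x
    using assms
    by (intro poly_ne_zero_if_newton_segment[OF dv]) (auto simp: coeff_pCons split: nat.split)
  then show ?thesis
    by blast
next
  case True
  obtain c where c: "c \<noteq> 0" "v c = min (v a) (v b) - 1"
    using discrete_valuation_surj[OF dv] by blast
  have "poly [:a, 0, c, 0, b:] x \<noteq> 0" for x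
  proof (cases "x = 0")
    case True
    then show ?thesis
      using assms by simp
  next
    case x: False
    define s where "s = v x"
    have "(v a < v c + 2 * s \<and> v a < v b + 4 * s) \<or> (v c + 2 * s < v a \<and> v c + 2 * s < v b + 4 * s) \<or>
         (v b + 4 * s < v a \<and> v b + 4 * s < v c + 2 * s)"
      using True c(2) by presburger
    then show ?thesis
    proof (elim disjE)
      assume "v a < v c + 2 * s \<and> v a < v b + 4 * s"
      then show ?thesis
        using assms c unfolding s_def
        by (intro poly_ne_zero_if_dominant_term[OF dv x, of _ 0])
          (auto simp: coeff_pCons split: nat.split)
    next
      assume "v c + 2 * s < v a \<and> v c + 2 * s < v b + 4 * s"
      then show ?thesis
        using assms c unfolding s_def
        by (intro poly_ne_zero_if_dominant_term[OF dv x, of _ 2])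
          (auto simp: coeff_pCons split: nat.split)
    next
      assume "v b + 4 * s < v a \<and> v b + 4 * s < v c + 2 * s"
      then show ?thesis
        using assms c unfolding s_def
        by (intro poly_ne_zero_if_dominant_term[OF dv x, of _ 4])
          (auto simp: coeff_pCons split: nat.split)
    qed
  qed
  then show ?thesis
    by blast
qed

lemma nora_wins_move:
  "legal_move d s i c \<Longrightarrow> nora_wins d k False (s(i := Some c)) \<Longrightarrow> nora_wins d (Suc k) True s"
  by auto

lemma nora_wins_reply:
  "(\<And>i c. legal_move d s i c \<Longrightarrow> nora_wins d k True (s(i := Some c))) \<Longrightarrow>
    nora_wins d (Suc k) False s"
  by simp

lemma final_poly_4: "final_poly 4 s = [:the (s 0), the (s 1), the (s 2), the (s 3), the (s 4):]"
  by (simp add: final_poly_def eval_nat_numeral monom_0 monom_Suc)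

lemma legal_move_4_cases:
  assumes "legal_move 4 s i c"
  obtains "i = 0" "s 0 = None" "c \<noteq> 0" | "i = 1" "s 1 = None" | "i = 2" "s 2 = None"
    | "i = 3" "s 3 = None" | "i = 4" "s 4 = None" "c \<noteq> 0"
proof -
  have "i \<in> {0, 1, 2, 3, 4}"
    using assms unfolding legal_move_def by auto
  then show thesis
    using assms that unfolding legal_move_def by auto
qed

lemma nora_wins_by_choosing_constant_coeff:
  fixes v :: "'a::field \<Rightarrow> int" and s :: "nat \<Rightarrow> 'a option"
  assumes dv: "discrete_valuation v" and "s 0 = None" "s 4 = Some a" "a \<noteq> 0"
  shows "nora_wins 4 1 True s"
proof -
  obtain c where c: "c \<noteq> 0" "\<forall>x. poly ([:0, the (s 1), the (s 2), the (s 3), a:] + [:c:]) x \<noteq> 0"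
    using exists_constant_coeff_without_root[OF dv, of "[:0, the (s 1), the (s 2), the (s 3), a:]"]
      assms(4) by auto
  then have "nora_wins 4 (Suc 0) True s"
    using assms by (intro nora_wins_move[of _ _ 0 c]) (simp_all add: legal_move_def final_poly_4)
  then show ?thesis
    by simp
qed

lemma nora_wins_by_choosing_leading_coeff:
  fixes v :: "'a::field \<Rightarrow> int" and s :: "nat \<Rightarrow> 'a option"
  assumes dv: "discrete_valuation v" and "s 4 = None" "s 0 = Some a" "a \<noteq> 0"
  shows "nora_wins 4 1 True s"
proof -
  let ?p = "[:a, the (s 1), the (s 2), the (s 3):]"
  have "coeff ?p 0 \<noteq> 0" "degree ?p < 4" "2 \<le> (4::nat)"
    using assms(4) by simp_all
  then obtain c where c: "c \<noteq> 0" "\<forall>x. poly (?p + monom c 4) x \<noteq> 0"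
    using exists_leading_coeff_without_root[OF dv] by blast
  moreover have "?p + monom c 4 = [:a, the (s 1), the (s 2), the (s 3), c:]"
    by (simp add: eval_nat_numeral monom_0 monom_Suc)
  ultimately have "\<forall>x. poly [:a, the (s 1), the (s 2), the (s 3), c:] x \<noteq> 0"
    by metis
  then have "nora_wins 4 (Suc 0) True s"
    using assms c(1) by (intro nora_wins_move[of _ _ 4 c]) (simp_all add: legal_move_def final_poly_4)
  then show ?thesis
    by simp
qed

lemma nora_wins_by_choosing_middle_coeff:
  fixes v :: "'a::field \<Rightarrow> int" and s :: "nat \<Rightarrow> 'a option"
  assumes dv: "discrete_valuation v" and "s 2 = None" "s 1 = Some 0" "s 3 = Some 0"
    and "s 0 = Some a" "a \<noteq> 0" "s 4 = Some b" "b \<noteq> 0"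
  shows "nora_wins 4 1 True s"
proof -
  obtain c where "\<forall>x. poly [:a, 0, c, 0, b:] x \<noteq> 0"
    using exists_middle_coeff_without_root[OF dv \<open>a \<noteq> 0\<close> \<open>b \<noteq> 0\<close>] by blast
  then have "nora_wins 4 (Suc 0) True s"
    using assms by (intro nora_wins_move[of _ _ 2 c]) (simp_all add: legal_move_def final_poly_4)
  then show ?thesis
    by simp
qed

lemma nora_wins_with_end_coeffs_open:
  fixes v :: "'a::field \<Rightarrow> int" and s :: "nat \<Rightarrow> 'a option"
  assumes dv: "discrete_valuation v" and "s 0 = None" "s 4 = None"
    and "s 1 \<noteq> None" "s 2 \<noteq> None" "s 3 \<noteq> None"
  shows "nora_wins 4 2 False s"
proof -
  have "nora_wins 4 1 True (s(i := Some c))" if "legal_move 4 s i c" for i c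
    using that assms(2-)
    by (cases rule: legal_move_4_cases)
      (auto simp del: nora_wins.simps One_nat_def
        intro: nora_wins_by_choosing_constant_coeff[OF dv] nora_wins_by_choosing_leading_coeff[OF dv])
  then have "nora_wins 4 (Suc 1) False s"
    by (rule nora_wins_reply)
  then show ?thesis
    by (simp only: numeral_2_eq_2 One_nat_def)
qed

lemma nora_wins_with_two_even_coeffs_open:
  fixes v :: "'a::field \<Rightarrow> int" and s :: "nat \<Rightarrow> 'a option"
  assumes dv: "discrete_valuation v" and "s 1 = Some 0" "s 3 = Some 0"
    and "k \<in> {0, 2, 4}" "s k = Some a" "k \<noteq> 2 \<Longrightarrow> a \<noteq> 0" "\<forall>j\<in>{0, 2, 4} - {k}. s j = None"
  shows "nora_wins 4 2 False s"
proof -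
  have "nora_wins 4 1 True (s(i := Some c))" if "legal_move 4 s i c" for i c
    using that assms(2-)
    by (cases rule: legal_move_4_cases)
      (auto simp del: nora_wins.simps One_nat_def
        intro: nora_wins_by_choosing_constant_coeff[OF dv] nora_wins_by_choosing_leading_coeff[OF dv]
          nora_wins_by_choosing_middle_coeff[OF dv])
  then have "nora_wins 4 (Suc 1) False s"
    by (rule nora_wins_reply)
  then show ?thesis
    by (simp only: numeral_2_eq_2 One_nat_def)
qed

lemma nora_wins_after_zero_linear_coeff:
  fixes v :: "'a::field \<Rightarrow> int"
  assumes dv: "discrete_valuation v"
  shows "nora_wins 4 4 False ((\<lambda>_. None :: 'a option)(1 := Some 0))"
proof -
  let ?s = "(\<lambda>_. None :: 'a option)(1 := Some 0)"
  have "nora_wins 4 (Suc 2) True (?s(i := Some c))" if "legal_move 4 ?s i c" for i c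
  proof (cases "i = 3")
    case True
    have "legal_move 4 (?s(i := Some c)) 2 0"
      using True by (simp add: legal_move_def)
    moreover have "nora_wins 4 2 False (?s(i := Some c, 2 := Some 0))"
      using True by (intro nora_wins_with_end_coeffs_open[OF dv]) auto
    ultimately show ?thesis
      by (rule nora_wins_move)
  next
    case False
    from that have "i \<in> {0, 2, 4}" "i \<noteq> 2 \<Longrightarrow> c \<noteq> 0"
      using False by (auto elim: legal_move_4_cases)
    then have "legal_move 4 (?s(i := Some c)) 3 0"
      by (auto simp: legal_move_def)
    moreover have "nora_wins 4 2 False (?s(i := Some c, 3 := Some 0))"
      using \<open>i \<in> {0, 2, 4}\<close> \<open>i \<noteq> 2 \<Longrightarrow> c \<noteq> 0\<close>
      by (intro nora_wins_with_two_even_coeffs_open[OF dv, of _ i c]) auto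
    ultimately show ?thesis
      by (rule nora_wins_move)
  qed
  then have "nora_wins 4 (Suc 3) False ?s"
    by (intro nora_wins_reply) simp
  then show ?thesis
    by simp
qed

theorem proposition1:
  fixes v :: "'a::field \<Rightarrow> int" and nora_first :: bool
  assumes "discrete_valuation v"
    and "v_complete v"
    and "nora_makes_last_move 4 nora_first"
  shows "nora_has_winning_strategy TYPE('a) 4 nora_first"
proof -
  have "nora_first"
    using assms(3) by (simp add: nora_makes_last_move_def)
  have "legal_move 4 (\<lambda>_. None :: 'a option) 1 0"
    by (simp add: legal_move_def)
  then have "nora_wins 4 (Suc 4) True (\<lambda>_. None :: 'a option)"
    using nora_wins_after_zero_linear_coeff[OF assms(1)] by (rule nora_wins_move)
  then show ?thesis
    using \<open>nora_first\<close> by (simp add: nora_has_winning_strategy_def)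
qed

end
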